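(* Let $H:\mathbb{T}^d\times\mathbb{R}^d\to\mathbb{R}$ be smooth and let $(u,m,\overline{H})$ be a classical solution of $$\Delta u+H(x,Du)=g(m)+\overline{H},\qquad \Delta m-\operatorname{div}(D_pH(x,Du)\,m)=0\quad\text{on }\mathbb{T}^d,$$ with $m>0$. Then for every $l>1$, $$\int_{\mathbb{T}^d}\Big|D\big(|\ln m|^{\frac{l+1}{2}}\big)\Big|^2dx\le\frac{(l+1)^2}{4}\int_{\mathbb{T}^d}|\ln m|^{l-1}\,|D_pH(x,Du)|^2\,dx.$$
   Context: $\mathbb{T}^d=\mathbb{R}^d/\mathbb{Z}^d$; a classical solution means $u,m$ are $C^2$ and the equations hold pointwise. *)

theory Defs
  imports "HOL-Analysis.Analysis"
begin

definition partial :: "'a::euclidean_space \<Rightarrow> ('a \<Rightarrow> real) \<Rightarrow> 'a \<Rightarrow> real" where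
  "partial b f x = deriv (\<lambda>t. f (x + t *\<^sub>R b)) 0"

fun Ck :: "nat \<Rightarrow> ('a::euclidean_space \<Rightarrow> real) \<Rightarrow> bool" where
  "Ck 0 f = continuous_on UNIV f"
| "Ck (Suc k) f = ((\<forall>x. f differentiable (at x)) \<and> continuous_on UNIV f
                   \<and> (\<forall>b\<in>Basis. Ck k (partial b f)))"

definition smooth :: "('a::euclidean_space \<Rightarrow> real) \<Rightarrow> bool" where
  "smooth f = (\<forall>k. Ck k f)"

definition grad :: "('a::euclidean_space \<Rightarrow> real) \<Rightarrow> 'a \<Rightarrow> 'a" where
  "grad f x = (\<Sum>b\<in>Basis. partial b f x *\<^sub>R b)"

definition laplacian :: "('a::euclidean_space \<Rightarrow> real) \<Rightarrow> 'a \<Rightarrow> real" where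
  "laplacian f x = (\<Sum>b\<in>Basis. partial b (partial b f) x)"

definition divergence :: "('a::euclidean_space \<Rightarrow> 'a) \<Rightarrow> 'a \<Rightarrow> real" where
  "divergence F x = (\<Sum>b\<in>Basis. partial b (\<lambda>y. F y \<bullet> b) x)"

definition DpH :: "('a::euclidean_space \<Rightarrow> 'a \<Rightarrow> real) \<Rightarrow> 'a \<Rightarrow> 'a \<Rightarrow> 'a" where
  "DpH H x p = grad (\<lambda>q. H x q) p"

text \<open>Integer lattice Z^d in R^d; functions on the torus = Z^d-periodic functions.\<close>
definition int_vec :: "real^'n \<Rightarrow> bool" where
  "int_vec k = (\<forall>i. k $ i \<in> \<int>)"

definition periodic :: "(real^'n \<Rightarrow> 'b) \<Rightarrow> bool" where
  "periodic f = (\<forall>x k. int_vec k \<longrightarrow> f (x + k) = f x)"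

text \<open>Integral over the torus = integral over the unit cube of the periodic lift.\<close>
definition torus_integral :: "(real^'n \<Rightarrow> real) \<Rightarrow> real" where
  "torus_integral f = integral (cbox 0 One) f"

end

(*
  Write w = ln m and \<beta> = D_pH(x, Du).  The Fokker-Planck equation says that the flux
  V = Dm - m \<beta> = m (Dw - \<beta>) is divergence free, so on the torus \<integral> D\<phi> \<cdot> V = 0 for every
  periodic C^1 test function \<phi>.  For \<phi> = K(w) with K'(s) = e^(-s) |s|^(l-1) the factor m
  cancels and D\<phi> \<cdot> V = |w|^(l-1) Dw \<cdot> (Dw - \<beta>).  Since |Dw|^2 \<le> 2 Dw \<cdot> (Dw - \<beta>) + |\<beta>|^2,
  this yields \<integral> |w|^(l-1) |Dw|^2 \<le> \<integral> |w|^(l-1) |\<beta>|^2, and the chain rule gives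
  |D(|w|^((l+1)/2))|^2 = ((l+1)/2)^2 |w|^(l-1) |Dw|^2.
*)

theory Submission
  imports Defs
begin

section \<open>Continuously differentiable functions\<close>

definition C1 :: "('a::euclidean_space \<Rightarrow> real) \<Rightarrow> bool" where
  "C1 f \<longleftrightarrow> (\<forall>x. f differentiable (at x)) \<and> (\<forall>b\<in>Basis. continuous_on UNIV (partial b f))"

lemma sum_Basis_inner_mult:
  assumes "b \<in> Basis"
  shows "(\<Sum>c\<in>Basis. (b \<bullet> c) * D c) = (D b :: real)"
proof -
  have "(\<Sum>c\<in>Basis. (b \<bullet> c) * D c) = (\<Sum>c\<in>Basis. if c = b then D c else 0)"
    using assms by (intro sum.cong) (auto simp: inner_Basis)
  then show ?thesis using assms by simp
qed

lemma partial_eq_has_derivative: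
  assumes "(f has_derivative L) (at x)"
  shows "partial b f x = L b"
proof -
  have "((\<lambda>t::real. x + t *\<^sub>R b) has_derivative (\<lambda>t. t *\<^sub>R b)) (at 0)"
    by (auto intro!: derivative_eq_intros)
  from has_derivative_compose[OF this, of f L] have
    "((\<lambda>t::real. f (x + t *\<^sub>R b)) has_derivative (\<lambda>t. t * L b)) (at 0)"
    using assms has_derivative_linear[OF assms] by (simp add: linear_scale)
  then have "((\<lambda>t::real. f (x + t *\<^sub>R b)) has_field_derivative L b) (at 0)"
    by (simp add: has_field_derivative_def mult.commute[of _ "L b"])
  then show ?thesis unfolding partial_def by (rule DERIV_imp_deriv)
qed

lemma partial_eq_has_derivative_sum:
  assumes "(f has_derivative (\<lambda>v. \<Sum>c\<in>Basis. (v \<bullet> c) * D c)) (at x)" "b \<in> Basis"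
  shows "partial b f x = D b"
  using partial_eq_has_derivative[OF assms(1)] sum_Basis_inner_mult[OF assms(2)] by simp

lemma C1_has_derivative:
  assumes "C1 f"
  shows "(f has_derivative (\<lambda>v. \<Sum>b\<in>Basis. (v \<bullet> b) * partial b f x)) (at x)"
proof -
  from assms obtain L where L: "(f has_derivative L) (at x)"
    unfolding C1_def differentiable_def by blast
  have "L v = (\<Sum>b\<in>Basis. (v \<bullet> b) * partial b f x)" for v
  proof -
    have "L v = L (\<Sum>b\<in>Basis. (v \<bullet> b) *\<^sub>R b)" by (simp add: euclidean_representation)
    also have "\<dots> = (\<Sum>b\<in>Basis. (v \<bullet> b) * L b)"
      using has_derivative_linear[OF L] by (simp add: linear_sum linear_scale)
    finally show ?thesis using partial_eq_has_derivative[OF L] by simp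
  qed
  then have "L = (\<lambda>v. \<Sum>b\<in>Basis. (v \<bullet> b) * partial b f x)" by auto
  then show ?thesis using L by simp
qed

lemma C1I:
  assumes "\<And>x. (f has_derivative (\<lambda>v. \<Sum>b\<in>Basis. (v \<bullet> b) * D b x)) (at x)"
    and "\<And>b. b \<in> Basis \<Longrightarrow> continuous_on UNIV (D b)"
  shows "C1 f"
proof -
  have "partial b f = D b" if "b \<in> Basis" for b
    using partial_eq_has_derivative_sum[OF assms(1) that] by auto
  then show ?thesis
    using assms unfolding C1_def differentiable_def by auto
qed

lemma C1_imp_continuous: "C1 f \<Longrightarrow> continuous_on UNIV f"
  unfolding C1_def
  by (meson continuous_at_imp_continuous_on differentiable_imp_continuous_within)

lemma continuous_on_partial: "C1 f \<Longrightarrow> b \<in> Basis \<Longrightarrow> continuous_on UNIV (partial b f)"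
  unfolding C1_def by blast

lemma Ck_imp_continuous: "Ck k f \<Longrightarrow> continuous_on UNIV f"
  by (cases k) simp_all

lemma Ck_imp_C1:
  assumes "Ck k f" "0 < k"
  shows "C1 f"
proof -
  obtain j where "k = Suc j" using assms(2) gr0_implies_Suc by blast
  with assms(1) show ?thesis unfolding C1_def by (auto intro: Ck_imp_continuous)
qed

lemma Ck_imp_C1_partial:
  assumes "Ck k f" "1 < k" "b \<in> Basis"
  shows "C1 (partial b f)"
proof -
  obtain j where "k = Suc j" "0 < j" using assms(2) by (cases k) auto
  with assms(1,3) have "Ck j (partial b f)" by simp
  then show ?thesis using \<open>0 < j\<close> by (rule Ck_imp_C1)
qed

lemma C1_inner_left: "C1 (\<lambda>y::'a::euclidean_space. y \<bullet> c)"
proof (rule C1I[where D = "\<lambda>b x. b \<bullet> c"])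
  have "(\<lambda>v. v \<bullet> c) = (\<lambda>v. \<Sum>b\<in>Basis. v \<bullet> b * (b \<bullet> c))"
    by (subst euclidean_inner) (simp add: inner_commute)
  then show "((\<lambda>y. y \<bullet> c) has_derivative (\<lambda>v. \<Sum>b\<in>Basis. v \<bullet> b * (b \<bullet> c))) (at x)" for x
    using has_derivative_inner_left[OF has_derivative_ident] by metis
qed simp

lemma
  assumes "C1 f" "C1 g"
  shows C1_mult: "C1 (\<lambda>x. f x * g x)"
    and partial_mult: "b \<in> Basis \<Longrightarrow> partial b (\<lambda>x. f x * g x) x = partial b f x * g x + f x * partial b g x"
proof -
  have d: "((\<lambda>x. f x * g x) has_derivative
      (\<lambda>v. \<Sum>b\<in>Basis. (v \<bullet> b) * (partial b f x * g x + f x * partial b g x))) (at x)" for x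
    by (rule has_derivative_eq_rhs[OF has_derivative_mult[OF C1_has_derivative[OF assms(1)]
          C1_has_derivative[OF assms(2)]]])
      (auto simp: algebra_simps sum_distrib_left sum_distrib_right sum.distrib)
  show "C1 (\<lambda>x. f x * g x)"
    using assms by (intro C1I[OF d] continuous_intros C1_imp_continuous continuous_on_partial)
  show "b \<in> Basis \<Longrightarrow> partial b (\<lambda>x. f x * g x) x = partial b f x * g x + f x * partial b g x"
    by (rule partial_eq_has_derivative_sum[OF d])
qed

lemma
  assumes "C1 f" "C1 g"
  shows C1_diff: "C1 (\<lambda>x. f x - g x)"
    and partial_diff: "b \<in> Basis \<Longrightarrow> partial b (\<lambda>x. f x - g x) x = partial b f x - partial b g x"
proof -
  have d: "((\<lambda>x. f x - g x) has_derivative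
      (\<lambda>v. \<Sum>b\<in>Basis. (v \<bullet> b) * (partial b f x - partial b g x))) (at x)" for x
    by (rule has_derivative_eq_rhs[OF has_derivative_diff[OF C1_has_derivative[OF assms(1)]
          C1_has_derivative[OF assms(2)]]])
      (auto simp: algebra_simps sum_subtractf)
  show "C1 (\<lambda>x. f x - g x)"
    using assms by (intro C1I[OF d] continuous_intros continuous_on_partial)
  show "b \<in> Basis \<Longrightarrow> partial b (\<lambda>x. f x - g x) x = partial b f x - partial b g x"
    by (rule partial_eq_has_derivative_sum[OF d])
qed

lemma has_derivative_comp_real:
  assumes "C1 f" "(k has_real_derivative k') (at (f x))"
  shows "((\<lambda>y. k (f y)) has_derivative (\<lambda>v. \<Sum>b\<in>Basis. (v \<bullet> b) * (k' * partial b f x))) (at x)"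
proof -
  have "((\<lambda>y. k (f y)) has_derivative (\<lambda>v. k' * (\<Sum>b\<in>Basis. (v \<bullet> b) * partial b f x))) (at x)"
    using has_derivative_compose[OF C1_has_derivative[OF assms(1)], of k "\<lambda>t. k' * t"] assms(2)
    by (simp add: has_field_derivative_def mult.commute[of _ k'])
  then show ?thesis
    by (rule has_derivative_eq_rhs) (simp add: sum_distrib_left mult.left_commute)
qed

lemma partial_comp_real:
  assumes "C1 f" "(k has_real_derivative k') (at (f x))" "b \<in> Basis"
  shows "partial b (\<lambda>y. k (f y)) x = k' * partial b f x"
  by (rule partial_eq_has_derivative_sum[OF has_derivative_comp_real[OF assms(1,2)] assms(3)])

lemma C1_comp_real:
  assumes "C1 f" "\<And>y. (k has_real_derivative k' (f y)) (at (f y))"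
    and "continuous_on UNIV (\<lambda>y. k' (f y))"
  shows "C1 (\<lambda>y. k (f y))"
proof (rule C1I[OF has_derivative_comp_real[OF assms(1,2)]])
  show "continuous_on UNIV (\<lambda>x. k' (f x) * partial b f x)" if "b \<in> Basis" for b
    by (intro continuous_on_mult assms(3) continuous_on_partial[OF assms(1) that])
qed

lemma C1_ln:
  assumes "C1 m" "\<And>x. m x > 0"
  shows "C1 (\<lambda>y. ln (m y))"
  using assms
  by (intro C1_comp_real[of m ln inverse] DERIV_ln continuous_on_inverse C1_imp_continuous)
    (auto simp: less_imp_neq[symmetric])

lemma continuous_on_Basis_components:
  fixes f :: "'a::topological_space \<Rightarrow> 'b::euclidean_space"
  assumes "\<And>b. b \<in> Basis \<Longrightarrow> continuous_on S (\<lambda>y. f y \<bullet> b)"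
  shows "continuous_on S f"
proof -
  have "continuous_on S (\<lambda>y. \<Sum>b\<in>Basis. (f y \<bullet> b) *\<^sub>R b)"
    using assms by (intro continuous_on_sum continuous_on_scaleR continuous_on_const)
  then show ?thesis by (simp add: euclidean_representation)
qed

lemma C1_comp:
  fixes F :: "'b::euclidean_space \<Rightarrow> real" and h :: "'a::euclidean_space \<Rightarrow> 'b"
  assumes F: "C1 F" and h: "\<And>c. c \<in> Basis \<Longrightarrow> C1 (\<lambda>y. h y \<bullet> c)"
  shows "C1 (\<lambda>y. F (h y))"
proof -
  define Dh where "Dh x v = (\<Sum>c\<in>Basis. (\<Sum>b\<in>Basis. (v \<bullet> b) * partial b (\<lambda>y. h y \<bullet> c) x) *\<^sub>R c)"
    for x v
  have "((\<lambda>y. \<Sum>c\<in>Basis. (h y \<bullet> c) *\<^sub>R c) has_derivative Dh x) (at x)" for x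
    unfolding Dh_def by (intro has_derivative_sum has_derivative_scaleR_left C1_has_derivative h)
  then have hd: "(h has_derivative Dh x) (at x)" for x
    by (simp add: euclidean_representation)
  have Dh: "Dh x v \<bullet> c = (\<Sum>b\<in>Basis. (v \<bullet> b) * partial b (\<lambda>y. h y \<bullet> c) x)" if "c \<in> Basis" for x v c
    unfolding Dh_def using that
    by (simp add: inner_sum_left inner_Basis if_distrib sum.delta cong: if_cong)
  have "((\<lambda>y. F (h y)) has_derivative (\<lambda>v. \<Sum>c\<in>Basis. (Dh x v \<bullet> c) * partial c F (h x))) (at x)" for x
    using has_derivative_compose[OF hd C1_has_derivative[OF F]] by simp
  then have d: "((\<lambda>y. F (h y)) has_derivative (\<lambda>v. \<Sum>b\<in>Basis. (v \<bullet> b) *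
      (\<Sum>c\<in>Basis. partial b (\<lambda>y. h y \<bullet> c) x * partial c F (h x)))) (at x)" for x
    by (rule has_derivative_eq_rhs)
      (auto simp: Dh sum_distrib_left sum_distrib_right algebra_simps intro: sum.swap)
  have "continuous_on UNIV h"
    by (rule continuous_on_Basis_components) (use h C1_imp_continuous in blast)
  then show ?thesis
    using F h
    by (intro C1I[OF d] continuous_intros continuous_on_partial
        continuous_on_compose2[of UNIV "partial _ F" UNIV h]) auto
qed

lemma inner_grad: "b \<in> Basis \<Longrightarrow> grad f x \<bullet> b = partial b f x"
  unfolding grad_def by (simp add: inner_sum_left inner_Basis if_distrib sum.delta cong: if_cong)

lemma grad_inner: "grad f x \<bullet> v = (\<Sum>b\<in>Basis. partial b f x * (v \<bullet> b))"
  by (subst euclidean_inner) (simp add: inner_grad cong: sum.cong)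

lemma continuous_on_grad: "C1 f \<Longrightarrow> continuous_on UNIV (grad f)"
  unfolding grad_def by (intro continuous_on_sum continuous_on_scaleR continuous_on_partial continuous_on_const)

lemma grad_comp_real:
  assumes "C1 f" "(k has_real_derivative k') (at (f x))"
  shows "grad (\<lambda>y. k (f y)) x = k' *\<^sub>R grad f x"
  unfolding grad_def using partial_comp_real[OF assms] by (simp add: scaleR_sum_right)

lemma divergence_grad: "divergence (grad f) x = laplacian f x"
  unfolding divergence_def laplacian_def by (simp add: inner_grad cong: sum.cong)

lemma divergence_diff:
  assumes "\<And>b. b \<in> Basis \<Longrightarrow> C1 (\<lambda>y. V y \<bullet> b)" "\<And>b. b \<in> Basis \<Longrightarrow> C1 (\<lambda>y. W y \<bullet> b)"
  shows "divergence (\<lambda>y. V y - W y) x = divergence V x - divergence W x"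
  unfolding divergence_def inner_diff_left
  by (simp add: partial_diff[OF assms(1,2)] sum_subtractf cong: sum.cong)

lemma
  fixes m :: "'a::euclidean_space \<Rightarrow> real" and \<beta> :: "'a \<Rightarrow> 'a"
  assumes m: "Ck 2 m" and \<beta>: "\<And>b. b \<in> Basis \<Longrightarrow> C1 (\<lambda>y. \<beta> y \<bullet> b)"
  shows C1_flux: "b \<in> Basis \<Longrightarrow> C1 (\<lambda>y. (grad m y - m y *\<^sub>R \<beta> y) \<bullet> b)"
    and divergence_flux:
      "divergence (\<lambda>y. grad m y - m y *\<^sub>R \<beta> y) x = laplacian m x - divergence (\<lambda>y. m y *\<^sub>R \<beta> y) x"
proof -
  have grad_m: "C1 (\<lambda>y. grad m y \<bullet> b)" if "b \<in> Basis" for b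
  proof -
    have "C1 (partial b m)" using Ck_imp_C1_partial[OF m _ that] by simp
    moreover have "(\<lambda>y. grad m y \<bullet> b) = partial b m" using inner_grad[OF that] by blast
    ultimately show ?thesis by simp
  qed
  have m_\<beta>: "C1 (\<lambda>y. (m y *\<^sub>R \<beta> y) \<bullet> b)" if "b \<in> Basis" for b
  proof -
    have "C1 m" using Ck_imp_C1[OF m] by simp
    from C1_mult[OF this \<beta>[OF that]] show ?thesis by simp
  qed
  show "b \<in> Basis \<Longrightarrow> C1 (\<lambda>y. (grad m y - m y *\<^sub>R \<beta> y) \<bullet> b)"
    using C1_diff[OF grad_m m_\<beta>] by (simp add: inner_diff_left)
  show "divergence (\<lambda>y. grad m y - m y *\<^sub>R \<beta> y) x = laplacian m x - divergence (\<lambda>y. m y *\<^sub>R \<beta> y) x"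
    by (simp add: divergence_diff[OF grad_m m_\<beta>] divergence_grad)
qed

section \<open>Integrals over the unit cell\<close>

lemma sum_Basis_if_eq:
  fixes v :: "'a::euclidean_space"
  assumes "k \<in> Basis"
  shows "(\<Sum>i\<in>Basis. (if i = k then c else v \<bullet> i) *\<^sub>R i) = v + (c - v \<bullet> k) *\<^sub>R k"
  using assms by (auto simp: euclidean_representation_sum inner_simps inner_Basis)

lemma integral_cbox_translate:
  fixes f :: "'a::euclidean_space \<Rightarrow> real"
  assumes "continuous_on UNIV f"
  shows "integral (cbox a b) (\<lambda>x. f (x + c)) = integral (cbox (a + c) (b + c)) f"
proof -
  have "(f has_integral integral (cbox (a + c) (b + c)) f) (cbox (a + c) (b + c))"
    using assms by (intro integrable_integral integrable_continuous) (auto intro: continuous_on_subset)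
  from has_integral_affinity'[OF this, of 1 c] show ?thesis
    by (simp add: integral_unique)
qed

lemma integral_unit_cube_translate_periodic:
  fixes f :: "'a::euclidean_space \<Rightarrow> real"
  assumes cont: "continuous_on UNIV f" and b: "b \<in> Basis"
    and per: "\<And>x. f (x + b) = f x" and t: "0 \<le> t" "t \<le> 1"
  shows "integral (cbox 0 One) (\<lambda>x. f (x + t *\<^sub>R b)) = integral (cbox 0 One) f"
proof -
  \<comment> \<open>cut \<open>B\<close> across \<open>b\<close> at heights \<open>t\<close> and \<open>1\<close>; the two slabs of width \<open>t\<close> agree by periodicity\<close>
  define B where "B = cbox (0::'a) (One + t *\<^sub>R b)"
  have int: "f integrable_on B" unfolding B_def
    using cont by (intro integrable_continuous) (auto intro: continuous_on_subset)
  have Bb: "(One + t *\<^sub>R b) \<bullet> b = 1 + t"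
    using b by (simp add: inner_simps)
  have "integral B f = integral (cbox 0 (One + t *\<^sub>R b - b)) f + integral (cbox (t *\<^sub>R b) (One + t *\<^sub>R b)) f"
    using integral_split[OF int[unfolded B_def] b, of t] t b
    by (simp add: B_def interval_split sum_Basis_if_eq Bb algebra_simps)
  moreover have "integral B f = integral (cbox 0 One) f + integral (cbox b (One + t *\<^sub>R b)) f"
    using integral_split[OF int[unfolded B_def] b, of 1] t b
    by (simp add: B_def interval_split sum_Basis_if_eq Bb algebra_simps)
  moreover have "integral (cbox b (One + t *\<^sub>R b)) f = integral (cbox 0 (One + t *\<^sub>R b - b)) f"
    using integral_cbox_translate[OF cont, of 0 "One + t *\<^sub>R b - b" b] per by simp
  moreover have "integral (cbox 0 One) (\<lambda>x. f (x + t *\<^sub>R b)) = integral (cbox (t *\<^sub>R b) (One + t *\<^sub>R b)) f"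
    using integral_cbox_translate[OF cont, of 0 One "t *\<^sub>R b"] by (simp add: add.commute)
  ultimately show ?thesis by simp
qed

lemma C1_line_has_real_derivative:
  assumes "C1 f" "b \<in> Basis"
  shows "((\<lambda>t. f (x + t *\<^sub>R b)) has_real_derivative partial b f (x + t *\<^sub>R b)) (at t)"
proof -
  have "((\<lambda>t::real. x + t *\<^sub>R b) has_derivative (\<lambda>s. s *\<^sub>R b)) (at t)"
    by (auto intro!: derivative_eq_intros)
  from has_derivative_compose[OF this C1_has_derivative[OF assms(1)]]
  have "((\<lambda>t. f (x + t *\<^sub>R b)) has_derivative
      (\<lambda>s. s * (\<Sum>c\<in>Basis. (b \<bullet> c) * partial c f (x + t *\<^sub>R b)))) (at t)"
    by (simp add: sum_distrib_left mult.assoc)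
  then show ?thesis
    unfolding has_field_derivative_def sum_Basis_inner_mult[OF assms(2)]
    by (simp add: mult.commute[of _ "partial b f _"])
qed

lemma integral_partial_periodic_eq_0:
  fixes f :: "'a::euclidean_space \<Rightarrow> real"
  assumes f: "C1 f" and b: "b \<in> Basis" and per: "\<And>x. f (x + b) = f x"
  shows "integral (cbox 0 One) (partial b f) = 0"
proof -
  \<comment> \<open>\<open>\<Phi>\<close> is constant by periodicity, and differentiating under the integral gives \<open>\<Phi>' 0\<close>\<close>
  define \<Phi> where "\<Phi> t = integral (cbox 0 One) (\<lambda>x. f (x + t *\<^sub>R b))" for t
  have shift: "continuous_on A (\<lambda>x. x + t *\<^sub>R b)" for A t
    by (intro continuous_intros)
  have "(\<Phi> has_field_derivative integral (cbox 0 One) (\<lambda>x. partial b f (x + 0 *\<^sub>R b))) (at 0 within UNIV)"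
    unfolding \<Phi>_def
  proof (rule leibniz_rule_field_derivative[where fx = "\<lambda>t x. partial b f (x + t *\<^sub>R b)"])
    show "((\<lambda>t. f (x + t *\<^sub>R b)) has_field_derivative partial b f (x + t *\<^sub>R b)) (at t within UNIV)" for t x
      using C1_line_has_real_derivative[OF f b] by simp
    show "(\<lambda>x. f (x + t *\<^sub>R b)) integrable_on cbox 0 One" for t
      by (intro integrable_continuous continuous_on_compose2[OF C1_imp_continuous[OF f] shift]) auto
    have "continuous_on (UNIV \<times> cbox 0 One) (\<lambda>z. partial b f (snd z + fst z *\<^sub>R b))"
      by (intro continuous_on_compose2[OF continuous_on_partial[OF f b]] continuous_intros) auto
    then show "continuous_on (UNIV \<times> cbox 0 One) (\<lambda>(t, x). partial b f (x + t *\<^sub>R b))"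
      by (simp add: case_prod_beta)
  qed (simp_all add: convex_UNIV)
  then have "(\<Phi> has_field_derivative integral (cbox 0 One) (partial b f)) (at 0)"
    by simp
  moreover have "(\<Phi> has_field_derivative 0) (at 0)"
  proof (rule has_field_derivative_transform_within_open[of "\<lambda>_. \<Phi> 0" 0 0 "{-1<..<1}"])
    show "\<Phi> 0 = \<Phi> t" if "t \<in> {-1<..<1}" for t
    proof (cases "t \<ge> 0")
      case True
      then show ?thesis
        unfolding \<Phi>_def using integral_unit_cube_translate_periodic[OF C1_imp_continuous[OF f] b per, of t] that
        by simp
    next
      case False
      \<comment> \<open>a negative shift is a shift by \<open>t + 1 \<in> [0, 1]\<close> in disguise\<close>
      have "f (x + t *\<^sub>R b) = f (x + (t + 1) *\<^sub>R b)" for x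
        using per[of "x + t *\<^sub>R b"] by (simp add: scaleR_add_left add.assoc)
      then have "\<Phi> t = \<Phi> (t + 1)" unfolding \<Phi>_def by simp
      also have "\<dots> = \<Phi> 0"
        unfolding \<Phi>_def using integral_unit_cube_translate_periodic[OF C1_imp_continuous[OF f] b per, of "t + 1"] that False
        by simp
      finally show ?thesis by simp
    qed
  qed auto
  ultimately show ?thesis by (rule DERIV_unique)
qed

lemma integral_grad_inner_divergence_free:
  fixes \<phi> :: "'a::euclidean_space \<Rightarrow> real" and V :: "'a \<Rightarrow> 'a"
  assumes \<phi>: "C1 \<phi>" and V: "\<And>b. b \<in> Basis \<Longrightarrow> C1 (\<lambda>y. V y \<bullet> b)"
    and \<phi>_per: "\<And>b x. b \<in> Basis \<Longrightarrow> \<phi> (x + b) = \<phi> x"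
    and V_per: "\<And>b x. b \<in> Basis \<Longrightarrow> V (x + b) = V x"
    and div_V: "\<And>x. divergence V x = 0"
  shows "integral (cbox 0 One) (\<lambda>x. grad \<phi> x \<bullet> V x) = 0"
proof -
  \<comment> \<open>integrate \<open>div (\<phi> V) = grad \<phi> \<bullet> V + \<phi> div V\<close> over the cell, one coordinate at a time\<close>
  have prod: "C1 (\<lambda>y. \<phi> y * (V y \<bullet> b))" if "b \<in> Basis" for b
    by (rule C1_mult[OF \<phi> V[OF that]])
  have "grad \<phi> x \<bullet> V x = (\<Sum>b\<in>Basis. partial b (\<lambda>y. \<phi> y * (V y \<bullet> b)) x)" for x
    using div_V[of x]
    by (simp add: grad_inner partial_mult[OF \<phi> V] divergence_def sum.distrib sum_distrib_left[symmetric])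
  then have "integral (cbox 0 One) (\<lambda>x. grad \<phi> x \<bullet> V x)
      = (\<Sum>b\<in>Basis. integral (cbox 0 One) (partial b (\<lambda>y. \<phi> y * (V y \<bullet> b))))"
    using prod
    by (simp add: integral_sum integrable_continuous continuous_on_subset[OF continuous_on_partial])
  also have "\<dots> = 0"
    using prod by (simp add: integral_partial_periodic_eq_0 \<phi>_per V_per)
  finally show ?thesis .
qed

section \<open>Antiderivatives and powers of the absolute value\<close>

lemma continuous_imp_has_antiderivative:
  fixes f :: "real \<Rightarrow> real"
  assumes "continuous_on UNIV f"
  obtains F where "\<And>x. (F has_real_derivative f x) (at x)"
proof -
  have "isCont f x" for x
    using assms by (simp add: continuous_on_eq_continuous_at)
  then obtain F where "\<And>x. (F has_vector_derivative f x) (at x)"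
    using einterval_antiderivative[of "-\<infinity>" "\<infinity>" f] by auto
  then show ?thesis
    using that has_real_derivative_iff_has_vector_derivative by blast
qed

lemma abs_powr_has_real_derivative:
  assumes p: "p > 1"
  shows "((\<lambda>s. \<bar>s\<bar> powr p) has_real_derivative (p * sgn s * \<bar>s\<bar> powr (p - 1))) (at s)"
proof -
  consider "s > 0" | "s < 0" | "s = 0" by linarith
  then show ?thesis
  proof cases
    case 1
    have "((\<lambda>s. s powr p) has_real_derivative (p * sgn s * \<bar>s\<bar> powr (p - 1))) (at s)"
      using has_real_derivative_powr[OF 1, of p] 1 by simp
    then show ?thesis
      by (rule has_field_derivative_transform_within_open[where S="{0<..}"]) (use 1 in auto)
  next
    case 2
    have "((\<lambda>s. (- s) powr p) has_real_derivative (p * (- s) powr (p - 1) * (-1))) (at s)"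
    proof -
      have "((\<lambda>s. s powr p) has_real_derivative (p * (- s) powr (p - 1))) (at (- s))"
        using has_real_derivative_powr[of "-s" p] 2 by simp
      moreover have "((\<lambda>s. - s) has_real_derivative (-1)) (at s)"
        by (auto intro!: derivative_eq_intros)
      ultimately show ?thesis by (rule DERIV_chain2)
    qed
    then have "((\<lambda>s. (- s) powr p) has_real_derivative (p * sgn s * \<bar>s\<bar> powr (p - 1))) (at s)"
      using 2 by simp
    then show ?thesis
      by (rule has_field_derivative_transform_within_open[where S="{..<0}"]) (use 2 in auto)
  next
    case 3
    have lim: "((\<lambda>h::real. \<bar>h\<bar> powr (p - 1)) \<longlongrightarrow> 0) (at 0)"
    proof -
      have "((\<lambda>h::real. \<bar>h\<bar> powr (p - 1)) \<longlongrightarrow> \<bar>0\<bar> powr (p - 1)) (at 0)"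
        using p by (intro tendsto_intros) auto
      then show ?thesis by simp
    qed
    have bound: "\<bar>(\<bar>h\<bar> powr p - \<bar>0\<bar> powr p) / (h - 0)\<bar> \<le> \<bar>h\<bar> powr (p - 1)" for h :: real
    proof (cases "h = 0")
      case False
      then have "\<bar>h\<bar> powr p = \<bar>h\<bar> powr (p - 1) * \<bar>h\<bar>"
        by (simp add: powr_diff)
      then show ?thesis using False by (simp add: abs_divide)
    qed simp
    have "((\<lambda>h. (\<bar>h\<bar> powr p - \<bar>0\<bar> powr p) / (h - 0)) \<longlongrightarrow> 0) (at 0)"
      by (rule Lim_null_comparison[OF always_eventually lim]) (use bound in simp)
    then show ?thesis
      using 3 by (simp add: has_field_derivative_iff)
  qed
qed

lemma norm_grad_abs_powr_sq:
  assumes w: "C1 w" and p: "p > 1"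
  shows "(norm (grad (\<lambda>y. \<bar>w y\<bar> powr p) x))\<^sup>2 = p\<^sup>2 * \<bar>w x\<bar> powr (2 * p - 2) * (norm (grad w x))\<^sup>2"
proof -
  have "(sgn (w x) * \<bar>w x\<bar> powr (p - 1))\<^sup>2 = \<bar>w x\<bar> powr (2 * p - 2)"
  proof (cases "w x = 0")
    case False
    have "(\<bar>w x\<bar> powr (p - 1))\<^sup>2 = \<bar>w x\<bar> powr (2 * p - 2)"
      unfolding power2_eq_square powr_add[symmetric] by (simp add: algebra_simps)
    moreover have "(sgn (w x))\<^sup>2 = 1" using False by (simp add: sgn_if)
    ultimately show ?thesis by (simp add: power_mult_distrib)
  qed simp
  then show ?thesis
    using grad_comp_real[OF w abs_powr_has_real_derivative[OF p]]
    by (simp add: power_mult_distrib)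
qed

lemma periodic_Basis:
  fixes f :: "real^'n \<Rightarrow> 'b"
  assumes "periodic f" "b \<in> Basis"
  shows "f (x + b) = f x"
proof -
  have "int_vec b"
    using assms(2) unfolding int_vec_def Basis_vec_def by (auto simp: axis_def)
  then show ?thesis using assms(1) unfolding periodic_def by blast
qed

lemma periodic_partial:
  fixes f :: "real^'n \<Rightarrow> real"
  assumes "periodic f"
  shows "periodic (partial b f)"
  unfolding periodic_def
proof (intro allI impI)
  fix x k :: "real^'n"
  assume "int_vec k"
  then have "f (x + k + t *\<^sub>R b) = f (x + t *\<^sub>R b)" for t
    using assms unfolding periodic_def by (metis add.commute add.left_commute)
  then show "partial b f (x + k) = partial b f x"
    unfolding partial_def by simp
qed

lemma periodic_grad:
  fixes f :: "real^'n \<Rightarrow> real"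
  assumes "periodic f"
  shows "periodic (grad f)"
  using periodic_partial[OF assms] unfolding periodic_def grad_def by simp

lemma periodic_DpH_grad:
  fixes H :: "real^'n \<Rightarrow> real^'n \<Rightarrow> real"
  assumes "\<And>x p k. int_vec k \<Longrightarrow> H (x + k) p = H x p" "periodic u"
  shows "periodic (\<lambda>y. DpH H y (grad u y))"
proof -
  have "H (x + k) = H x" if "int_vec k" for x k
    using assms(1)[OF that] by blast
  then show ?thesis
    using periodic_grad[OF assms(2)] unfolding periodic_def DpH_def by simp
qed

section \<open>The logarithmic estimate\<close>

lemma norm_sq_le_inner_diff:
  fixes a b :: "'a::real_inner"
  shows "(norm a)\<^sup>2 \<le> 2 * (a \<bullet> (a - b)) + (norm b)\<^sup>2"
proof -
  have "0 \<le> (norm (a - b))\<^sup>2" by simp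
  then show ?thesis
    by (simp add: power2_norm_eq_inner inner_diff_left inner_diff_right inner_commute)
qed

lemma integral_log_gradient_flux_eq_0:
  fixes m :: "real^'n \<Rightarrow> real" and \<beta> :: "real^'n \<Rightarrow> real^'n" and \<theta> :: "real \<Rightarrow> real"
  assumes m: "Ck 2 m" "periodic m" "\<And>x. m x > 0"
    and \<beta>: "\<And>b. b \<in> Basis \<Longrightarrow> C1 (\<lambda>y. \<beta> y \<bullet> b)" "periodic \<beta>"
    and Fokker_Planck: "\<And>x. laplacian m x - divergence (\<lambda>y. m y *\<^sub>R \<beta> y) x = 0"
    and \<theta>: "continuous_on UNIV \<theta>"
  shows "integral (cbox 0 One) (\<lambda>x. \<theta> (ln (m x)) *
           (grad (\<lambda>y. ln (m y)) x \<bullet> (grad (\<lambda>y. ln (m y)) x - \<beta> x))) = 0"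
proof -
  define w where "w = (\<lambda>y. ln (m y))"
  define V where "V = (\<lambda>y. grad m y - m y *\<^sub>R \<beta> y)"
  have m1: "C1 m" using Ck_imp_C1[OF m(1)] by simp
  have w: "C1 w" unfolding w_def using C1_ln[OF m1 m(3)] .
  have grad_m: "grad m y = m y *\<^sub>R grad w y" for y
    using grad_comp_real[OF m1 DERIV_ln[OF m(3)]] m(3)[of y] unfolding w_def by simp
  \<comment> \<open>the test function is \<open>\<phi> = K (ln m)\<close>; the factor \<open>exp (-s)\<close> in \<open>K'\<close> cancels the \<open>m\<close> in \<open>V\<close>\<close>
  have K': "continuous_on UNIV (\<lambda>s. exp (- s) * \<theta> s)"
    by (intro continuous_intros \<theta>)
  then obtain K where K: "\<And>s. (K has_real_derivative exp (- s) * \<theta> s) (at s)"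
    using continuous_imp_has_antiderivative by blast
  define \<phi> where "\<phi> y = K (w y)" for y
  have \<phi>: "C1 \<phi>"
    unfolding \<phi>_def using C1_imp_continuous[OF w]
    by (intro C1_comp_real[OF w K] continuous_on_compose2[OF K']) auto
  have "grad \<phi> y \<bullet> V y = \<theta> (w y) * (grad w y \<bullet> (grad w y - \<beta> y))" for y
  proof -
    have "grad \<phi> y \<bullet> V y = \<theta> (w y) * (exp (- w y) * m y) * (grad w y \<bullet> (grad w y - \<beta> y))"
      unfolding \<phi>_def grad_comp_real[OF w K] V_def grad_m
      by (simp add: algebra_simps inner_diff_right)
    moreover have "exp (- w y) * m y = 1"
      using m(3)[of y] unfolding w_def by (simp add: exp_minus)
    ultimately show ?thesis by simp
  qed
  moreover have "integral (cbox 0 One) (\<lambda>x. grad \<phi> x \<bullet> V x) = 0"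
  proof (rule integral_grad_inner_divergence_free[OF \<phi>])
    show "C1 (\<lambda>y. V y \<bullet> b)" if "b \<in> Basis" for b
      unfolding V_def by (rule C1_flux[OF m(1) \<beta>(1) that])
    show "divergence V x = 0" for x
      using Fokker_Planck[of x] divergence_flux[OF m(1) \<beta>(1), of x] by (simp add: V_def)
    have "periodic w" "periodic V"
      using m(2) periodic_grad[OF m(2)] \<beta>(2) unfolding periodic_def w_def V_def by simp_all
    then show "\<phi> (x + b) = \<phi> x" "V (x + b) = V x" if "b \<in> Basis" for b x
      using that unfolding \<phi>_def by (simp_all add: periodic_Basis)
  qed
  ultimately show ?thesis unfolding w_def by simp
qed

lemma weighted_log_gradient_le_drift:
  fixes m :: "real^'n \<Rightarrow> real" and \<beta> :: "real^'n \<Rightarrow> real^'n" and \<theta> :: "real \<Rightarrow> real"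
  assumes m: "Ck 2 m" "periodic m" "\<And>x. m x > 0"
    and \<beta>: "\<And>b. b \<in> Basis \<Longrightarrow> C1 (\<lambda>y. \<beta> y \<bullet> b)" "periodic \<beta>"
    and Fokker_Planck: "\<And>x. laplacian m x - divergence (\<lambda>y. m y *\<^sub>R \<beta> y) x = 0"
    and \<theta>: "continuous_on UNIV \<theta>" "\<And>s. \<theta> s \<ge> 0"
  shows "integral (cbox 0 One) (\<lambda>x. \<theta> (ln (m x)) * (norm (grad (\<lambda>y. ln (m y)) x))\<^sup>2)
       \<le> integral (cbox 0 One) (\<lambda>x. \<theta> (ln (m x)) * (norm (\<beta> x))\<^sup>2)"
proof -
  define w where "w = (\<lambda>y. ln (m y))"
  have w: "C1 w" unfolding w_def using C1_ln[OF Ck_imp_C1[OF m(1)] m(3)] by simp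
  have "continuous_on UNIV \<beta>"
    by (rule continuous_on_Basis_components) (use \<beta>(1) C1_imp_continuous in blast)
  moreover have "continuous_on UNIV (\<lambda>x. \<theta> (w x))"
    by (rule continuous_on_compose2[OF \<theta>(1) C1_imp_continuous[OF w]]) auto
  ultimately have integrable:
      "(\<lambda>x. \<theta> (w x) * (norm (grad w x))\<^sup>2) integrable_on cbox 0 One"
      "(\<lambda>x. \<theta> (w x) * (norm (\<beta> x))\<^sup>2) integrable_on cbox 0 One"
      "(\<lambda>x. \<theta> (w x) * (grad w x \<bullet> (grad w x - \<beta> x))) integrable_on cbox 0 One"
    using continuous_on_grad[OF w]
    by (auto intro!: integrable_continuous continuous_intros intro: continuous_on_subset)
  have "integral (cbox 0 One) (\<lambda>x. \<theta> (w x) * (norm (grad w x))\<^sup>2)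
      \<le> integral (cbox 0 One) (\<lambda>x. 2 * (\<theta> (w x) * (grad w x \<bullet> (grad w x - \<beta> x)))
                                 + \<theta> (w x) * (norm (\<beta> x))\<^sup>2)"
  proof (rule integral_le)
    show "\<theta> (w x) * (norm (grad w x))\<^sup>2
        \<le> 2 * (\<theta> (w x) * (grad w x \<bullet> (grad w x - \<beta> x))) + \<theta> (w x) * (norm (\<beta> x))\<^sup>2" for x
      using mult_left_mono[OF norm_sq_le_inner_diff[of "grad w x" "\<beta> x"] \<theta>(2)[of "w x"]]
      by (simp add: algebra_simps)
  qed (use integrable in \<open>auto intro: integrable_add integrable_cmul\<close>)
  also have "\<dots> = integral (cbox 0 One) (\<lambda>x. \<theta> (w x) * (norm (\<beta> x))\<^sup>2)"
    using integrable integral_log_gradient_flux_eq_0[OF m \<beta> Fokker_Planck \<theta>(1)]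
    by (simp add: integral_add w_def)
  finally show ?thesis unfolding w_def .
qed

lemma C1_DpH_grad:
  fixes H :: "'a::euclidean_space \<Rightarrow> 'a \<Rightarrow> real"
  assumes H: "Ck 2 (\<lambda>z. H (fst z) (snd z))" and u: "Ck 2 u" and e: "e \<in> Basis"
  shows "C1 (\<lambda>y. DpH H y (grad u y) \<bullet> e)"
proof -
  let ?H = "\<lambda>z::'a \<times> 'a. H (fst z) (snd z)"
  have "DpH H x p \<bullet> e = partial (0, e) ?H (x, p)" for x p
    unfolding DpH_def inner_grad[OF e] by (simp add: partial_def)
  moreover have "C1 (\<lambda>y. partial (0, e) ?H (y, grad u y))"
  proof (rule C1_comp[where F = "partial (0, e) ?H" and h = "\<lambda>y. (y, grad u y)"])
    have "(0, e) \<in> (Basis :: ('a \<times> 'a) set)"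
      using e by (auto simp: Basis_prod_def)
    from Ck_imp_C1_partial[OF H _ this] show "C1 (partial (0, e) ?H)" by simp
    show "C1 (\<lambda>y. (y, grad u y) \<bullet> c)" if "c \<in> Basis" for c :: "'a \<times> 'a"
    proof -
      from that consider c1 where "c = (c1, 0)" | c2 where "c = (0, c2)" "c2 \<in> Basis"
        unfolding Basis_prod_def by blast
      then show ?thesis
      proof cases
        case 1
        then show ?thesis using C1_inner_left[of c1] by simp
      next
        case 2
        then show ?thesis using Ck_imp_C1_partial[OF u _ 2(2)] by (simp add: inner_grad)
      qed
    qed
  qed
  ultimately show ?thesis by simp
qed

theorem lemma3p6:
  fixes H :: "real^'n \<Rightarrow> real^'n \<Rightarrow> real"
    and g :: "real \<Rightarrow> real"
    and u m :: "real^'n \<Rightarrow> real"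
    and Hbar l :: real
  assumes H_smooth: "smooth (\<lambda>z::(real^'n) \<times> (real^'n). H (fst z) (snd z))"
    and H_per: "\<And>x p k. int_vec k \<Longrightarrow> H (x + k) p = H x p"
    and u_C2: "Ck 2 u" and m_C2: "Ck 2 m"
    and u_per: "periodic u" and m_per: "periodic m"
    and m_pos: "\<And>x. m x > 0"
    and eq1: "\<And>x. laplacian u x + H x (grad u x) = g (m x) + Hbar"
    and eq2: "\<And>x. laplacian m x - divergence (\<lambda>y. m y *\<^sub>R DpH H y (grad u y)) x = 0"
    and l: "l > 1"
  shows "torus_integral (\<lambda>x. (norm (grad (\<lambda>y. \<bar>ln (m y)\<bar> powr ((l + 1) / 2)) x))\<^sup>2)
         \<le> (l + 1)\<^sup>2 / 4 *
           torus_integral (\<lambda>x. \<bar>ln (m x)\<bar> powr (l - 1) * (norm (DpH H x (grad u x)))\<^sup>2)"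
proof -
  define \<beta> where "\<beta> = (\<lambda>y. DpH H y (grad u y))"
  have "C1 (\<lambda>y. \<beta> y \<bullet> b)" if "b \<in> Basis" for b
    unfolding \<beta>_def using H_smooth u_C2 that by (intro C1_DpH_grad) (auto simp: smooth_def)
  moreover have "periodic \<beta>"
    unfolding \<beta>_def by (rule periodic_DpH_grad[OF H_per u_per])
  moreover have "continuous_on UNIV (\<lambda>s::real. \<bar>s\<bar> powr (l - 1))"
    using l by (intro continuous_on_powr' continuous_on_rabs continuous_on_id continuous_on_const) auto
  ultimately have energy:
    "integral (cbox 0 One) (\<lambda>x. \<bar>ln (m x)\<bar> powr (l - 1) * (norm (grad (\<lambda>y. ln (m y)) x))\<^sup>2)
     \<le> integral (cbox 0 One) (\<lambda>x. \<bar>ln (m x)\<bar> powr (l - 1) * (norm (\<beta> x))\<^sup>2)"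
    using m_C2 m_per m_pos eq2 unfolding \<beta>_def
    by (intro weighted_log_gradient_le_drift) auto
  have pointwise: "(norm (grad (\<lambda>y. \<bar>ln (m y)\<bar> powr ((l + 1) / 2)) x))\<^sup>2
      = (l + 1)\<^sup>2 / 4 * (\<bar>ln (m x)\<bar> powr (l - 1) * (norm (grad (\<lambda>y. ln (m y)) x))\<^sup>2)" for x
  proof -
    have p: "(l + 1) / 2 > 1" "((l + 1) / 2)\<^sup>2 = (l + 1)\<^sup>2 / 4" "2 * ((l + 1) / 2) - 2 = l - 1"
      using l by (simp_all add: power_divide)
    from norm_grad_abs_powr_sq[OF C1_ln[OF Ck_imp_C1[OF m_C2] m_pos] p(1)]
    show ?thesis unfolding p(2,3) mult.assoc by simp
  qed
  have "torus_integral (\<lambda>x. (norm (grad (\<lambda>y. \<bar>ln (m y)\<bar> powr ((l + 1) / 2)) x))\<^sup>2)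
      = (l + 1)\<^sup>2 / 4 * integral (cbox 0 One)
          (\<lambda>x. \<bar>ln (m x)\<bar> powr (l - 1) * (norm (grad (\<lambda>y. ln (m y)) x))\<^sup>2)"
    unfolding torus_integral_def pointwise by simp
  also have "\<dots> \<le> (l + 1)\<^sup>2 / 4 * integral (cbox 0 One) (\<lambda>x. \<bar>ln (m x)\<bar> powr (l - 1) * (norm (\<beta> x))\<^sup>2)"
    using energy by (rule mult_left_mono) simp
  finally show ?thesis
    unfolding torus_integral_def \<beta>_def .
qed

end
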